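(* Let $G=(V,E)$ be an essentially 4-edge-connected graph with minimum degree three and let $T$ be a spanning tree of $G$ with root $r$ such that $L=E\setminus T$ contains no leaf-matching links for $T$. Then there is an admissible top-down coloring algorithm with factor $\frac{3}{5}$ on the links in $L$.
   Context: $G$ is essentially 4-edge-connected if $|\delta(S)|\ge4$ for all $S\subseteq V$ with $2\le|S|\le|V|-2$. An edge $uv\in L$ is a leaf-matching link for $T$ if $u$ and $v$ both have degree one in $T$ and $u,v\neq r$. Elements of $L$ are called links. For a link $\ell$, $P_\ell$ is the path in $T$ between its endpoints; for $e\in T$, $\mathrm{cov}(e)=\{\ell\in L: e\in P_\ell\}$. Orient $T$ away from $r$; the LCA of a link $uv$ is the least common ancestor of $u$ and $v$ in the rooted tree, and an LCA is higher if it is closer to $r$. A naive coloring algorithm with factor $\frac{p}{q}$ processes the links one at a time and assigns to each link a set of $p$ distinct colors from a fixed set of $q$ colors $\{c_1,\dots,c_q\}$. In a partial coloring, a tree edge $e\in T$ has received color $c$ if some already colored link $\ell$ with $e\in P_\ell$ has $c$ among its colors. A top-down coloring algorithm with factor $\frac{p}{q}$ is a naive coloring algorithm with factor $\frac{p}{q}$ that colors a link only after all links with higher LCA have been colored. It is admissible if for every edge $e\in T$ and every partial coloring arising during the algorithm in which all links of $\mathrm{cov}(e)$ are colored, $e$ has received all $q$ colors. *)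

theory Defs
  imports Main
begin

definition graph :: "'a set \<Rightarrow> 'a set set \<Rightarrow> bool" where
  "graph V E \<longleftrightarrow> finite V \<and> (\<forall>e\<in>E. \<exists>u v. e = {u, v} \<and> u \<noteq> v \<and> u \<in> V \<and> v \<in> V)"

definition deg :: "'a set set \<Rightarrow> 'a \<Rightarrow> nat" where
  "deg F v = card {e\<in>F. v \<in> e}"

definition cut :: "'a set set \<Rightarrow> 'a set \<Rightarrow> 'a set set" where
  "cut E S = {e\<in>E. card (e \<inter> S) = 1}"

definition ess_4_edge_connected :: "'a set \<Rightarrow> 'a set set \<Rightarrow> bool" where
  "ess_4_edge_connected V E \<longleftrightarrow>
     (\<forall>S. S \<subseteq> V \<and> 2 \<le> card S \<and> card S \<le> card V - 2 \<longrightarrow> card (cut E S) \<ge> 4)"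

definition min_degree_ge :: "'a set \<Rightarrow> 'a set set \<Rightarrow> nat \<Rightarrow> bool" where
  "min_degree_ge V E k \<longleftrightarrow> (\<forall>v\<in>V. deg E v \<ge> k)"

definition spath :: "'a set set \<Rightarrow> 'a list \<Rightarrow> bool" where
  "spath F xs \<longleftrightarrow> xs \<noteq> [] \<and> distinct xs \<and>
     (\<forall>i. Suc i < length xs \<longrightarrow> {xs ! i, xs ! Suc i} \<in> F)"

definition path_edges :: "'a list \<Rightarrow> 'a set set" where
  "path_edges xs = {{xs ! i, xs ! Suc i} | i. Suc i < length xs}"

definition connected_in :: "'a set set \<Rightarrow> 'a \<Rightarrow> 'a \<Rightarrow> bool" where
  "connected_in F u v \<longleftrightarrow> (\<exists>xs. spath F xs \<and> hd xs = u \<and> last xs = v)"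

text \<open>Spanning tree: a connected spanning subgraph which is minimally connected
  (removing any edge disconnects its endpoints), i.e. connected and acyclic.\<close>
definition spanning_tree :: "'a set \<Rightarrow> 'a set set \<Rightarrow> 'a set set \<Rightarrow> bool" where
  "spanning_tree V E T \<longleftrightarrow> T \<subseteq> E \<and>
     (\<forall>u\<in>V. \<forall>v\<in>V. connected_in T u v) \<and>
     (\<forall>e\<in>T. \<forall>u v. e = {u, v} \<longrightarrow> \<not> connected_in (T - {e}) u v)"

definition tree_path :: "'a set set \<Rightarrow> 'a \<Rightarrow> 'a \<Rightarrow> 'a list" where
  "tree_path T u v = (THE xs. spath T xs \<and> hd xs = u \<and> last xs = v)"

definition link_path :: "'a set set \<Rightarrow> 'a set \<Rightarrow> 'a set set" where
  "link_path T l = {e. \<exists>u v. l = {u, v} \<and> e \<in> path_edges (tree_path T u v)}"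

definition cov :: "'a set set \<Rightarrow> 'a set set \<Rightarrow> 'a set \<Rightarrow> 'a set set" where
  "cov T L e = {l\<in>L. e \<in> link_path T l}"

definition depth :: "'a set set \<Rightarrow> 'a \<Rightarrow> 'a \<Rightarrow> nat" where
  "depth T r v = length (tree_path T r v) - 1"

definition ancestor :: "'a set set \<Rightarrow> 'a \<Rightarrow> 'a \<Rightarrow> 'a \<Rightarrow> bool" where
  "ancestor T r a v \<longleftrightarrow> a \<in> set (tree_path T r v)"

definition lca :: "'a set set \<Rightarrow> 'a \<Rightarrow> 'a \<Rightarrow> 'a \<Rightarrow> 'a" where
  "lca T r u v = (THE a. ancestor T r a u \<and> ancestor T r a v \<and>
      (\<forall>b. ancestor T r b u \<and> ancestor T r b v \<longrightarrow> depth T r b \<le> depth T r a))"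

definition higher_lca :: "'a set set \<Rightarrow> 'a \<Rightarrow> 'a set \<Rightarrow> 'a set \<Rightarrow> bool" where
  "higher_lca T r l' l \<longleftrightarrow> (\<exists>u v u' v'. l = {u, v} \<and> l' = {u', v'} \<and>
      depth T r (lca T r u' v') < depth T r (lca T r u v))"

definition leaf_matching_link :: "'a set set \<Rightarrow> 'a \<Rightarrow> 'a set \<Rightarrow> bool" where
  "leaf_matching_link T r l \<longleftrightarrow> (\<exists>u v. l = {u, v} \<and> deg T u = 1 \<and> deg T v = 1 \<and> u \<noteq> r \<and> v \<noteq> r)"

text \<open>A run of a naive coloring algorithm with factor p/q on the link set L is
  given by the order \<open>ord\<close> in which the links are processed and the set of
  colors \<open>col l\<close> (p distinct colors out of {1..q}) assigned to each link l.
  The partial colorings arising during the run are those after the first k links.\<close>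
definition naive_coloring :: "'a set set \<Rightarrow> nat \<Rightarrow> nat \<Rightarrow> 'a set list \<Rightarrow> ('a set \<Rightarrow> nat set) \<Rightarrow> bool" where
  "naive_coloring L p q ord col \<longleftrightarrow> distinct ord \<and> set ord = L \<and>
     (\<forall>l\<in>L. col l \<subseteq> {1..q} \<and> card (col l) = p)"

definition top_down :: "'a set set \<Rightarrow> 'a \<Rightarrow> 'a set list \<Rightarrow> bool" where
  "top_down T r ord \<longleftrightarrow> (\<forall>i j. i < length ord \<and> j < length ord \<and>
      higher_lca T r (ord ! i) (ord ! j) \<longrightarrow> i < j)"

definition received :: "'a set set \<Rightarrow> 'a set set \<Rightarrow> ('a set \<Rightarrow> nat set) \<Rightarrow> 'a set set \<Rightarrow> 'a set \<Rightarrow> nat set" where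
  "received T L col C e = (\<Union>l\<in>cov T L e \<inter> C. col l)"

definition admissible :: "'a set set \<Rightarrow> 'a set set \<Rightarrow> nat \<Rightarrow> 'a set list \<Rightarrow> ('a set \<Rightarrow> nat set) \<Rightarrow> bool" where
  "admissible T L q ord col \<longleftrightarrow> (\<forall>e\<in>T. \<forall>k\<le>length ord.
      cov T L e \<subseteq> set (take k ord) \<longrightarrow> received T L col (set (take k ord)) e = {1..q})"

definition admissible_top_down_coloring ::
  "'a set set \<Rightarrow> 'a \<Rightarrow> 'a set set \<Rightarrow> nat \<Rightarrow> nat \<Rightarrow> 'a set list \<Rightarrow> ('a set \<Rightarrow> nat set) \<Rightarrow> bool" where
  "admissible_top_down_coloring T r L p q ord col \<longleftrightarrow>
     naive_coloring L p q ord col \<and> top_down T r ord \<and> admissible T L q ord col"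

end

(*
  The three colours of a link are encoded by the pair of colours it misses: a tree edge e
  receives all five colours iff the missing pairs of the links covering e have no common
  element.  The vertex sets D(e) below the tree edges e form a laminar family, and a link
  covers e iff it has exactly one end in D(e).  The cut of D(e) has at least three edges
  (minimum degree three, or four by essential 4-edge-connectivity), so e is covered at least
  twice; if exactly twice, D(e) is a leaf or all of V - {r}, and then, as there are no
  leaf-matching links, a link covering two such edges enters both at the same end.

  Missing pairs are chosen greedily in order of increasing LCA depth, keeping the invariant:
  the coloured links covering e miss at most one common colour once there are two of them,
  and none once all of them are coloured.  The edges covered by a new link l split according
  to the end of l inside D(e); on each side the sets of coloured links covering these edges
  are nested, since l is deepest.  So each side forbids at most one pair and at most two
  colours, not both sides two colours, and a suitable pair out of five colours remains.

  Admissibility only inspects edges whose covering links are all coloured, so the required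
  top-down order can be any order sorted by LCA depth.
*)

theory Submission
  imports Defs
begin

lemma ex_two_subset_notin:
  assumes "finite A" "finite W" "card W < card A choose 2"
  shows "\<exists>p\<subseteq>A. card p = 2 \<and> p \<notin> W"
proof -
  have "card W < card {p. p \<subseteq> A \<and> card p = 2}"
    unfolding n_subsets[OF assms(1)] by (rule assms(3))
  then have "\<not> {p. p \<subseteq> A \<and> card p = 2} \<subseteq> W"
    using card_mono[OF assms(2)] leD by blast
  then show ?thesis by blast
qed

lemma ex_missing_pair:
  fixes F\<^sub>1 F\<^sub>2 :: "nat set"
  assumes "F\<^sub>1 \<subseteq> {1..5}" "F\<^sub>2 \<subseteq> {1..5}" "card F\<^sub>1 \<le> 2" "card F\<^sub>2 \<le> 2"
    and "card F\<^sub>1 + card F\<^sub>2 \<le> 3"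
    and "X\<^sub>1 \<subseteq> {x\<^sub>1}" "X\<^sub>2 \<subseteq> {x\<^sub>2}" "\<forall>x\<in>X\<^sub>1. F\<^sub>1 \<subseteq> x" "\<forall>x\<in>X\<^sub>2. F\<^sub>2 \<subseteq> x"
  shows "\<exists>p\<subseteq>{1..5} - (F\<^sub>1 \<union> F\<^sub>2). card p = 2 \<and> p \<notin> X\<^sub>1 \<union> X\<^sub>2"
proof -
  let ?A = "{1..5} - (F\<^sub>1 \<union> F\<^sub>2)"
  let ?W = "{x \<in> X\<^sub>1 \<union> X\<^sub>2. x \<inter> (F\<^sub>1 \<union> F\<^sub>2) = {}}"
  have fin: "finite F\<^sub>1" "finite F\<^sub>2" using assms(1,2) finite_subset by auto
  have card_A: "card ?A = 5 - card (F\<^sub>1 \<union> F\<^sub>2)"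
    using assms(1,2) by (simp add: card_Diff_subset fin)
  have "?W \<subseteq> {x\<^sub>1, x\<^sub>2}" using assms(6,7) by blast
  then have "card ?W \<le> card {x\<^sub>1, x\<^sub>2}" by (rule card_mono[rotated]) simp
  also have "\<dots> \<le> 2" by (simp add: card_insert_le_m1)
  finally have card_W: "card ?W \<le> 2" .
  have "card ?W < card ?A choose 2"
  proof (cases "F\<^sub>1 = {} \<or> F\<^sub>2 = {}")
    case True
    then have "card (F\<^sub>1 \<union> F\<^sub>2) \<le> 2" using assms(3,4) by auto
    then have "3 choose 2 \<le> card ?A choose 2" using card_A by (intro binomial_right_mono) simp
    then show ?thesis using card_W by (simp add: choose_two)
  next
    case False
    then have "?W = {}" using assms(8,9) by blast
    moreover have "card (F\<^sub>1 \<union> F\<^sub>2) \<le> 3" using assms(5) card_Un_le[of F\<^sub>1 F\<^sub>2] by linarith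
    then have "2 choose 2 \<le> card ?A choose 2" using card_A by (intro binomial_right_mono) simp
    ultimately show ?thesis by (metis card.empty binomial_n_n less_le_trans zero_less_one)
  qed
  moreover have "finite ?W" using assms(6,7) by (simp add: finite_subset)
  ultimately obtain p where "p \<subseteq> ?A" "card p = 2" "p \<notin> ?W"
    using ex_two_subset_notin[of ?A ?W] by auto
  then show ?thesis by blast
qed

lemma card_pair_Int_eq_1_iff:
  assumes "u \<noteq> v"
  shows "card ({u, v} \<inter> S) = 1 \<longleftrightarrow> (u \<in> S \<longleftrightarrow> v \<notin> S)"
  using assms by (cases "u \<in> S"; cases "v \<in> S") (auto simp: Int_insert_left)

lemma card_Int_le_1_if_card_2:
  assumes "card p = 2" "card q = 2" "p \<noteq> q"
  shows "card (p \<inter> q) \<le> 1"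
proof (rule ccontr)
  assume "\<not> card (p \<inter> q) \<le> 1"
  then have "card p \<le> card (p \<inter> q)" "card q \<le> card (p \<inter> q)" using assms(1,2) by simp_all
  moreover have "finite p" "finite q" using assms(1,2) card.infinite by fastforce+
  ultimately have "p \<inter> q = p" "p \<inter> q = q"
    by (metis Int_lower1 Int_lower2 card_seteq finite_Int)+
  then show False using assms(3) by simp
qed

lemma card_Int_INT_le_1:
  assumes "finite A" "A \<noteq> {}" "\<forall>a\<in>A. card (\<pi> a) = 2" "card p = 2"
    and "2 \<le> card A \<Longrightarrow> card (\<Inter>a\<in>A. \<pi> a) \<le> 1" and "\<And>b. A = {b} \<Longrightarrow> p \<noteq> \<pi> b"
  shows "card (p \<inter> (\<Inter>a\<in>A. \<pi> a)) \<le> 1"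
proof (cases "2 \<le> card A")
  case True
  obtain b where "b \<in> A" using assms(2) by blast
  then have "(\<Inter>a\<in>A. \<pi> a) \<subseteq> \<pi> b" "finite (\<pi> b)"
    using assms(3) card.infinite by (blast, force)
  then have "finite (\<Inter>a\<in>A. \<pi> a)" by (rule finite_subset)
  then have "card (p \<inter> (\<Inter>a\<in>A. \<pi> a)) \<le> card (\<Inter>a\<in>A. \<pi> a)" by (intro card_mono) auto
  then show ?thesis using assms(5) True by linarith
next
  case False
  moreover have "card A \<noteq> 0" using assms(1,2) by simp
  ultimately have "card A = 1" by linarith
  then obtain b where "A = {b}" by (rule card_1_singletonE)
  then show ?thesis using card_Int_le_1_if_card_2 assms(3,4,6) by simp
qed

lemma card_UN_INT_chain_le_1:
  assumes "\<forall>A\<in>\<A>. \<forall>B\<in>\<A>. A \<subseteq> B \<or> B \<subseteq> A"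
    and "\<forall>A\<in>\<A>. finite (\<Inter>a\<in>A. \<pi> a) \<and> card (\<Inter>a\<in>A. \<pi> a) \<le> 1"
    and "finite (\<Union>A\<in>\<A>. \<Inter>a\<in>A. \<pi> a)"
  shows "card (\<Union>A\<in>\<A>. \<Inter>a\<in>A. \<pi> a) \<le> 1"
proof -
  have single: "x = y" if "x \<in> (\<Inter>a\<in>A. \<pi> a)" "y \<in> (\<Inter>a\<in>A. \<pi> a)" "A \<in> \<A>" for x y A
  proof -
    have "finite (\<Inter>a\<in>A. \<pi> a)" "card (\<Inter>a\<in>A. \<pi> a) \<le> Suc 0" using assms(2) that(3) by auto
    then show ?thesis using that(1,2) by (auto simp: card_le_Suc0_iff_eq)
  qed
  have "c = d" if "c \<in> (\<Inter>a\<in>A. \<pi> a)" "d \<in> (\<Inter>a\<in>B. \<pi> a)" "A \<in> \<A>" "B \<in> \<A>" for c d A B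
  proof -
    have "A \<subseteq> B \<or> B \<subseteq> A" using assms(1) that(3,4) by blast
    then show "c = d"
    proof
      assume "A \<subseteq> B"
      then show "c = d" using single[of c A d] that(1,2,3) by blast
    next
      assume "B \<subseteq> A"
      then show "c = d" using single[of c B d] that(1,2,4) by blast
    qed
  qed
  then have "\<forall>c\<in>(\<Union>A\<in>\<A>. \<Inter>a\<in>A. \<pi> a). \<forall>d\<in>(\<Union>A\<in>\<A>. \<Inter>a\<in>A. \<pi> a). c = d" by blast
  then show ?thesis using card_le_Suc0_iff_eq[OF assms(3)] by simp
qed

section \<open>Greedy colouring of a laminar family\<close>

text \<open>\<open>S e\<close> stands for the vertex set below the tree edge \<open>e\<close>; a link covers \<open>e\<close> iff it
  has exactly one end in \<open>S e\<close>. The last assumption is where the absence of leaf-matching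
  links enters.\<close>

locale laminar_links =
  fixes L :: "'a set set" and T :: "'e set" and S :: "'e \<Rightarrow> 'a set"
  assumes finite_links: "finite L"
    and link_pair: "l \<in> L \<Longrightarrow> \<exists>u v. l = {u, v} \<and> u \<noteq> v"
    and finite_index: "finite T"
    and laminar: "e \<in> T \<Longrightarrow> f \<in> T \<Longrightarrow> S e \<inter> S f \<noteq> {} \<Longrightarrow> S e \<subseteq> S f \<or> S f \<subseteq> S e"
    and card_crossing_ge_2: "e \<in> T \<Longrightarrow> 2 \<le> card {l\<in>L. card (l \<inter> S e) = 1}"
    and tight_crossing_same_end: "\<lbrakk>e \<in> T; f \<in> T; l \<in> L; card (l \<inter> S e) = 1; card (l \<inter> S f) = 1;
       card {l\<in>L. card (l \<inter> S e) = 1} = 2; card {l\<in>L. card (l \<inter> S f) = 1} = 2\<rbrakk>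
       \<Longrightarrow> l \<inter> S e = l \<inter> S f"
begin

definition crossing :: "'e \<Rightarrow> 'a set set" where
  "crossing e = {l\<in>L. card (l \<inter> S e) = 1}"

text \<open>The depth of the LCA of \<open>l\<close>.\<close>

definition nesting :: "'a set \<Rightarrow> nat" where
  "nesting l = card {e\<in>T. l \<subseteq> S e}"

text \<open>\<open>\<pi> a\<close> is the pair of colours missed by the coloured link \<open>a\<close>.\<close>

definition valid_partial :: "'a set set \<Rightarrow> ('a set \<Rightarrow> nat set) \<Rightarrow> bool" where
  "valid_partial C \<pi> \<longleftrightarrow> (\<forall>a\<in>C. \<pi> a \<subseteq> {1..5} \<and> card (\<pi> a) = 2) \<and>
     (\<forall>e\<in>T. 2 \<le> card (crossing e \<inter> C) \<longrightarrow> card (\<Inter>a\<in>crossing e \<inter> C. \<pi> a) \<le> 1) \<and>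
     (\<forall>e\<in>T. crossing e \<subseteq> C \<longrightarrow> (\<Inter>a\<in>crossing e. \<pi> a) = {})"

lemma finite_crossing: "finite (crossing e)"
  using finite_links by (simp add: crossing_def)

lemma two_le_card_crossing: "e \<in> T \<Longrightarrow> 2 \<le> card (crossing e)"
  using card_crossing_ge_2 by (simp add: crossing_def)

text \<open>Otherwise \<open>l'\<close> would lie in \<open>S f\<close> and in every \<open>S g\<close> containing \<open>l\<close>, so it
  would be deeper than \<open>l\<close>.\<close>

lemma crossing_outward:
  assumes "e \<in> T" "f \<in> T" "S e \<subseteq> S f" "l \<in> L" "u \<in> l" "u \<in> S e" "v \<in> l" "v \<notin> S f"
    and "l' \<in> crossing e" "nesting l' \<le> nesting l"
  shows "l' \<in> crossing f"
proof (rule ccontr)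
  assume not_crossing: "l' \<notin> crossing f"
  obtain w w' where l': "l' = {w, w'}" "w \<noteq> w'" using link_pair[of l'] assms(9) unfolding crossing_def by blast
  have "l' \<inter> S e \<noteq> {}" using assms(9) by (auto simp: crossing_def)
  then have "l' \<inter> S f \<noteq> {}" using assms(3) by blast
  with not_crossing have l'_inside: "l' \<subseteq> S f"
    using assms(9) l' card_pair_Int_eq_1_iff[OF l'(2)] by (auto simp: crossing_def)
  have "{g\<in>T. l \<subseteq> S g} \<subseteq> {g\<in>T. l' \<subseteq> S g}"
  proof safe
    fix g x assume g: "g \<in> T" "l \<subseteq> S g" "x \<in> l'"
    have "S g \<subseteq> S f \<or> S f \<subseteq> S g" using laminar[OF g(1) assms(2)] assms(3,5,6) g(2) by blast
    then show "x \<in> S g" using g(2,3) assms(7,8) l'_inside by blast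
  qed
  moreover have "f \<in> {g\<in>T. l' \<subseteq> S g} - {g\<in>T. l \<subseteq> S g}" using assms(2,7,8) l'_inside by blast
  ultimately have "nesting l < nesting l'"
    unfolding nesting_def by (intro psubset_card_mono) (use finite_index in auto)
  then show False using assms(10) by simp
qed

lemma crossing_chain:
  assumes "C \<subseteq> L" "\<forall>a\<in>C. nesting a \<le> nesting l"
    and "e \<in> T" "f \<in> T" "l \<in> crossing e" "l \<in> crossing f" "l \<inter> S e = l \<inter> S f"
  shows "crossing e \<inter> C \<subseteq> crossing f \<inter> C \<or> crossing f \<inter> C \<subseteq> crossing e \<inter> C"
proof -
  obtain u v where l: "l = {u, v}" "u \<noteq> v" "l \<in> L"
    using link_pair[of l] assms(5) unfolding crossing_def by blast
  obtain x where x: "l \<inter> S e = {x}"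
    using assms(5) card_1_singletonE unfolding crossing_def by blast
  obtain y where y: "y \<in> l" "y \<noteq> x" using l by blast
  have x_in: "x \<in> l" "x \<in> S e" "x \<in> S f" and y_out: "y \<notin> S e" "y \<notin> S f"
    using x y assms(7) by blast+
  have "S e \<subseteq> S f \<or> S f \<subseteq> S e" using laminar assms(3,4) x_in by blast
  then show ?thesis
  proof
    assume "S e \<subseteq> S f"
    show ?thesis
      using crossing_outward[OF assms(3,4) \<open>S e \<subseteq> S f\<close> l(3) x_in(1,2) y(1) y_out(2)] assms(1,2)
      by blast
  next
    assume "S f \<subseteq> S e"
    show ?thesis
      using crossing_outward[OF assms(4,3) \<open>S f \<subseteq> S e\<close> l(3) x_in(1,3) y(1) y_out(1)] assms(1,2)
      by blast
  qed
qed

context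
  fixes C :: "'a set set" and l :: "'a set" and G :: "'e set" and \<pi> :: "'a set \<Rightarrow> nat set"
  assumes new_link: "l \<notin> C" and valid: "valid_partial C \<pi>"
    and side: "G \<subseteq> T" "\<forall>e\<in>G. l \<in> crossing e"
    and chain: "\<forall>e\<in>G. \<forall>f\<in>G. crossing e \<inter> C \<subseteq> crossing f \<inter> C \<or> crossing f \<inter> C \<subseteq> crossing e \<inter> C"
begin

lemma missing_pair: "a \<in> C \<Longrightarrow> \<pi> a \<subseteq> {1..5} \<and> card (\<pi> a) = 2"
  using valid by (auto simp: valid_partial_def)

lemma last_link_edge:
  assumes "e \<in> G" "crossing e - {l} \<subseteq> C"
  shows "crossing e = insert l (crossing e \<inter> C)" "crossing e \<inter> C \<noteq> {}"
proof -
  show eq: "crossing e = insert l (crossing e \<inter> C)" using assms side(2) by blast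
  show "crossing e \<inter> C \<noteq> {}"
  proof
    assume "crossing e \<inter> C = {}"
    then have "crossing e = {l}" using eq by simp
    then show False using two_le_card_crossing[of e] assms(1) side(1) by auto
  qed
qed

lemma single_link_in_last_link_edge:
  assumes "e \<in> G" "crossing e - {l} \<subseteq> C" "f \<in> G" "crossing f \<inter> C = {a}"
  shows "a \<in> crossing e \<inter> C"
proof -
  have "crossing e \<inter> C \<subseteq> {a} \<or> {a} \<subseteq> crossing e \<inter> C" using chain assms by metis
  then show ?thesis using last_link_edge(2)[OF assms(1,2)] by blast
qed

lemma card_forced_colours:
  defines "F \<equiv> \<Union>A\<in>(\<lambda>e. crossing e \<inter> C) ` {e\<in>G. crossing e - {l} \<subseteq> C}. \<Inter>a\<in>A. \<pi> a"
  shows "card F \<le> 2" "card F = 2 \<Longrightarrow> \<exists>e\<in>G. card (crossing e) = 2"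
proof -
  have "card F \<le> 2 \<and> (card F = 2 \<longrightarrow> (\<exists>e\<in>G. card (crossing e) = 2))"
  proof (cases "\<exists>e\<in>G. crossing e - {l} \<subseteq> C \<and> card (crossing e \<inter> C) < 2")
    case True
    then obtain e where e: "e \<in> G" "crossing e - {l} \<subseteq> C" "card (crossing e \<inter> C) < 2" by blast
    then have "card (crossing e \<inter> C) = 1"
      using last_link_edge(2)[OF e(1,2)] finite_crossing by (simp add: less_2_cases_iff)
    then obtain a where a: "crossing e \<inter> C = {a}" by (rule card_1_singletonE)
    have "a \<in> C" "a \<noteq> l" using a new_link by blast+
    have "F \<subseteq> \<pi> a" using single_link_in_last_link_edge[OF _ _ e(1) a] by (fastforce simp: F_def)
    then have "card F \<le> card (\<pi> a)"
      using missing_pair[OF \<open>a \<in> C\<close>] card.infinite by (intro card_mono) fastforce+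
    moreover have "card (crossing e) = 2" using last_link_edge(1)[OF e(1,2)] a \<open>a \<noteq> l\<close> by simp
    ultimately show ?thesis using missing_pair[OF \<open>a \<in> C\<close>] e(1) by auto
  next
    case False
    have "\<forall>A\<in>(\<lambda>e. crossing e \<inter> C) ` {e\<in>G. crossing e - {l} \<subseteq> C}.
        finite (\<Inter>a\<in>A. \<pi> a) \<and> card (\<Inter>a\<in>A. \<pi> a) \<le> 1"
    proof
      fix A assume "A \<in> (\<lambda>e. crossing e \<inter> C) ` {e\<in>G. crossing e - {l} \<subseteq> C}"
      then obtain e where e: "e \<in> G" "crossing e - {l} \<subseteq> C" "A = crossing e \<inter> C" by blast
      then have "e \<in> T" "2 \<le> card (crossing e \<inter> C)" using False side(1) by auto
      then have "card (\<Inter>a\<in>A. \<pi> a) \<le> 1" using valid e(3) unfolding valid_partial_def by blast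
      moreover obtain a where "a \<in> A" using last_link_edge(2)[OF e(1,2)] e(3) by blast
      then have "(\<Inter>a\<in>A. \<pi> a) \<subseteq> {1..5}" using missing_pair e(3) by blast
      then have "finite (\<Inter>a\<in>A. \<pi> a)" using finite_subset by blast
      ultimately show "finite (\<Inter>a\<in>A. \<pi> a) \<and> card (\<Inter>a\<in>A. \<pi> a) \<le> 1" by blast
    qed
    moreover have "\<forall>A\<in>(\<lambda>e. crossing e \<inter> C) ` {e\<in>G. crossing e - {l} \<subseteq> C}.
        \<forall>B\<in>(\<lambda>e. crossing e \<inter> C) ` {e\<in>G. crossing e - {l} \<subseteq> C}. A \<subseteq> B \<or> B \<subseteq> A"
      using chain by simp
    moreover have "F \<subseteq> {1..5}" using last_link_edge(2) missing_pair by (fastforce simp: F_def)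
    then have "finite F" using finite_subset by blast
    ultimately have "card F \<le> 1" unfolding F_def by (intro card_UN_INT_chain_le_1)
    then show ?thesis by simp
  qed
  then show "card F \<le> 2" "card F = 2 \<Longrightarrow> \<exists>e\<in>G. card (crossing e) = 2" by auto
qed

text \<open>The pair missed by \<open>l\<close> must differ from the pairs in \<open>X\<close> (of the single coloured link
  covering an edge of \<open>G\<close>) and avoid the colours in \<open>F\<close> (missed by all coloured links
  covering an edge of \<open>G\<close> whose last link is \<open>l\<close>).\<close>

lemma side_constraints:
  obtains X x F where "X \<subseteq> {x}" "F \<subseteq> {1..5}" "card F \<le> 2" "\<forall>y\<in>X. F \<subseteq> y"
    "card F = 2 \<Longrightarrow> \<exists>e\<in>G. card (crossing e) = 2"
    "\<And>e a. e \<in> G \<Longrightarrow> crossing e \<inter> C = {a} \<Longrightarrow> \<pi> a \<in> X"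
    "\<And>e. e \<in> G \<Longrightarrow> crossing e - {l} \<subseteq> C \<Longrightarrow> (\<Inter>a\<in>crossing e \<inter> C. \<pi> a) \<subseteq> F"
proof -
  define X where "X = {\<pi> a | a. \<exists>e\<in>G. crossing e \<inter> C = {a}}"
  define F where "F = (\<Union>A\<in>(\<lambda>e. crossing e \<inter> C) ` {e\<in>G. crossing e - {l} \<subseteq> C}. \<Inter>a\<in>A. \<pi> a)"
  have "y = z" if yz: "y \<in> X" "z \<in> X" for y z
  proof -
    obtain a e where a: "y = \<pi> a" "e \<in> G" "crossing e \<inter> C = {a}" using yz(1) X_def by blast
    obtain b f where b: "z = \<pi> b" "f \<in> G" "crossing f \<inter> C = {b}" using yz(2) X_def by blast
    have "{a} \<subseteq> {b} \<or> {b} \<subseteq> {a}" using chain a(2,3) b(2,3) by metis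
    then show "y = z" using a(1) b(1) by blast
  qed
  then obtain x where X_single: "X \<subseteq> {x}" by blast
  have F_range: "F \<subseteq> {1..5}" using last_link_edge(2) missing_pair by (fastforce simp: F_def)
  have F_in_X: "\<forall>y\<in>X. F \<subseteq> y"
    using single_link_in_last_link_edge by (fastforce simp: X_def F_def)
  have X_mem: "\<pi> a \<in> X" if "e \<in> G" "crossing e \<inter> C = {a}" for e a
    using that by (auto simp: X_def)
  have F_mem: "(\<Inter>a\<in>crossing e \<inter> C. \<pi> a) \<subseteq> F" if "e \<in> G" "crossing e - {l} \<subseteq> C" for e
    using that by (auto simp: F_def)
  show ?thesis
    using card_forced_colours[folded F_def]
    by (intro that[OF X_single F_range _ F_in_X _ X_mem F_mem]) auto
qed

end

lemma valid_partial_insert: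
  assumes "valid_partial C \<pi>" "l \<notin> C" "p \<subseteq> {1..5}" "card p = 2"
    and new_pair: "\<And>e a. e \<in> T \<Longrightarrow> l \<in> crossing e \<Longrightarrow> crossing e \<inter> C = {a} \<Longrightarrow> p \<noteq> \<pi> a"
    and no_common: "\<And>e. e \<in> T \<Longrightarrow> l \<in> crossing e \<Longrightarrow> crossing e - {l} \<subseteq> C \<Longrightarrow>
      p \<inter> (\<Inter>a\<in>crossing e \<inter> C. \<pi> a) = {}"
  shows "valid_partial (insert l C) (\<pi>(l := p))"
proof -
  let ?\<pi> = "\<pi>(l := p)"
  have pairs: "\<pi> a \<subseteq> {1..5}" "card (\<pi> a) = 2" if "a \<in> C" for a
    using assms(1) that by (auto simp: valid_partial_def)
  have old: "crossing e \<inter> insert l C = crossing e \<inter> C"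
    "(\<Inter>a\<in>crossing e \<inter> C. ?\<pi> a) = (\<Inter>a\<in>crossing e \<inter> C. \<pi> a)" if "l \<notin> crossing e" for e
    using that assms(2) by auto
  have new: "crossing e \<inter> insert l C = insert l (crossing e \<inter> C)"
    "(\<Inter>a\<in>insert l (crossing e \<inter> C). ?\<pi> a) = p \<inter> (\<Inter>a\<in>crossing e \<inter> C. \<pi> a)"
    if "l \<in> crossing e" for e
    using that assms(2) by auto
  have at_most_one: "card (\<Inter>a\<in>crossing e \<inter> insert l C. ?\<pi> a) \<le> 1"
    if e: "e \<in> T" "2 \<le> card (crossing e \<inter> insert l C)" for e
  proof (cases "l \<in> crossing e")
    case False
    then have "2 \<le> card (crossing e \<inter> C)" using e(2) old(1)[OF False] by simp
    then have "card (\<Inter>a\<in>crossing e \<inter> C. \<pi> a) \<le> 1"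
      using assms(1) e(1) unfolding valid_partial_def by blast
    then show ?thesis using old[OF False] by simp
  next
    case True
    have "card (p \<inter> (\<Inter>a\<in>crossing e \<inter> C. \<pi> a)) \<le> 1"
    proof (rule card_Int_INT_le_1)
      show "finite (crossing e \<inter> C)" using finite_crossing by simp
      show "crossing e \<inter> C \<noteq> {}" using e(2) new(1)[OF True] by auto
      show "\<forall>a\<in>crossing e \<inter> C. card (\<pi> a) = 2" using pairs(2) by blast
      show "card (\<Inter>a\<in>crossing e \<inter> C. \<pi> a) \<le> 1" if "2 \<le> card (crossing e \<inter> C)"
        using assms(1) e(1) that unfolding valid_partial_def by blast
      show "p \<noteq> \<pi> b" if "crossing e \<inter> C = {b}" for b
        using new_pair[OF e(1) True that] .
    qed (rule assms(4))
    then show ?thesis using new[OF True] by simp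
  qed
  have none: "(\<Inter>a\<in>crossing e. ?\<pi> a) = {}" if e: "e \<in> T" "crossing e \<subseteq> insert l C" for e
  proof (cases "l \<in> crossing e")
    case False
    then have "crossing e \<subseteq> C" using e(2) by blast
    then have "(\<Inter>a\<in>crossing e. \<pi> a) = {}" using assms(1) e(1) unfolding valid_partial_def by blast
    moreover have "(\<Inter>a\<in>crossing e. ?\<pi> a) = (\<Inter>a\<in>crossing e. \<pi> a)" using False by auto
    ultimately show ?thesis by simp
  next
    case True
    then have "crossing e = insert l (crossing e \<inter> C)" using e(2) by blast
    then show ?thesis using new(2)[OF True] no_common[OF e(1) True] e(2) by force
  qed
  show ?thesis
    unfolding valid_partial_def using pairs assms(3,4) at_most_one none by auto
qed

lemma valid_partial_extend:
  assumes "C \<subseteq> L" "l \<in> L" "l \<notin> C" "\<forall>a\<in>C. nesting a \<le> nesting l" "valid_partial C \<pi>"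
  shows "\<exists>p. valid_partial (insert l C) (\<pi>(l := p))"
proof -
  obtain u v where l: "l = {u, v}" "u \<noteq> v" using link_pair assms(2) by blast
  define side where "side x = {e\<in>T. l \<in> crossing e \<and> l \<inter> S e = {x}}" for x
  have side_chain: "\<forall>e\<in>side x. \<forall>f\<in>side x.
      crossing e \<inter> C \<subseteq> crossing f \<inter> C \<or> crossing f \<inter> C \<subseteq> crossing e \<inter> C" for x
    using crossing_chain[OF assms(1,4)] by (auto simp: side_def)
  have side_sub: "side x \<subseteq> T" "\<forall>e\<in>side x. l \<in> crossing e" for x by (auto simp: side_def)
  obtain X\<^sub>u x\<^sub>u F\<^sub>u where u: "X\<^sub>u \<subseteq> {x\<^sub>u}" "F\<^sub>u \<subseteq> {1..5}" "card F\<^sub>u \<le> 2" "\<forall>y\<in>X\<^sub>u. F\<^sub>u \<subseteq> y"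
    "card F\<^sub>u = 2 \<Longrightarrow> \<exists>e\<in>side u. card (crossing e) = 2"
    "\<And>e a. e \<in> side u \<Longrightarrow> crossing e \<inter> C = {a} \<Longrightarrow> \<pi> a \<in> X\<^sub>u"
    "\<And>e. e \<in> side u \<Longrightarrow> crossing e - {l} \<subseteq> C \<Longrightarrow> (\<Inter>a\<in>crossing e \<inter> C. \<pi> a) \<subseteq> F\<^sub>u"
    by (rule side_constraints[OF assms(3,5) side_sub[of u] side_chain[of u]]) (rule that)
  obtain X\<^sub>v x\<^sub>v F\<^sub>v where v: "X\<^sub>v \<subseteq> {x\<^sub>v}" "F\<^sub>v \<subseteq> {1..5}" "card F\<^sub>v \<le> 2" "\<forall>y\<in>X\<^sub>v. F\<^sub>v \<subseteq> y"
    "card F\<^sub>v = 2 \<Longrightarrow> \<exists>e\<in>side v. card (crossing e) = 2"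
    "\<And>e a. e \<in> side v \<Longrightarrow> crossing e \<inter> C = {a} \<Longrightarrow> \<pi> a \<in> X\<^sub>v"
    "\<And>e. e \<in> side v \<Longrightarrow> crossing e - {l} \<subseteq> C \<Longrightarrow> (\<Inter>a\<in>crossing e \<inter> C. \<pi> a) \<subseteq> F\<^sub>v"
    by (rule side_constraints[OF assms(3,5) side_sub[of v] side_chain[of v]]) (rule that)
  have "\<not> (card F\<^sub>u = 2 \<and> card F\<^sub>v = 2)"
  proof
    assume "card F\<^sub>u = 2 \<and> card F\<^sub>v = 2"
    then obtain e f where "e \<in> side u" "f \<in> side v" "card (crossing e) = 2" "card (crossing f) = 2"
      using u(5) v(5) by blast
    then have "l \<inter> S e = l \<inter> S f"
      using tight_crossing_same_end[of e f l] assms(2) by (auto simp: side_def crossing_def)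
    then show False using \<open>e \<in> side u\<close> \<open>f \<in> side v\<close> l(2) by (auto simp: side_def)
  qed
  then have "card F\<^sub>u + card F\<^sub>v \<le> 3" using u(3) v(3) by linarith
  then obtain p where p: "p \<subseteq> {1..5} - (F\<^sub>u \<union> F\<^sub>v)" "card p = 2" "p \<notin> X\<^sub>u \<union> X\<^sub>v"
    using ex_missing_pair[OF u(2) v(2) u(3) v(3) _ u(1) v(1) u(4) v(4)] by blast
  have sides: "e \<in> side u \<or> e \<in> side v" if e: "e \<in> T" "l \<in> crossing e" for e
  proof -
    obtain x where "l \<inter> S e = {x}"
      using e(2) card_1_singletonE unfolding crossing_def by blast
    then show ?thesis using e l(1) by (auto simp: side_def)
  qed
  have "valid_partial (insert l C) (\<pi>(l := p))"
  proof (rule valid_partial_insert[OF assms(5,3)])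
    show "p \<subseteq> {1..5}" "card p = 2" using p by auto
    show "p \<noteq> \<pi> a" if "e \<in> T" "l \<in> crossing e" "crossing e \<inter> C = {a}" for e a
      using sides[OF that(1,2)] u(6) v(6) that(3) p(3) by blast
    show "p \<inter> (\<Inter>a\<in>crossing e \<inter> C. \<pi> a) = {}"
      if "e \<in> T" "l \<in> crossing e" "crossing e - {l} \<subseteq> C" for e
    proof -
      have "(\<Inter>a\<in>crossing e \<inter> C. \<pi> a) \<subseteq> F\<^sub>u \<union> F\<^sub>v"
        using sides[OF that(1,2)] u(7)[of e] v(7)[of e] that(3) by blast
      then show ?thesis using p(1) by blast
    qed
  qed
  then show ?thesis ..
qed

theorem ex_missing_pairs:
  "\<exists>\<pi>::'a set \<Rightarrow> nat set.
    (\<forall>a\<in>L. \<pi> a \<subseteq> {1..5} \<and> card (\<pi> a) = 2) \<and> (\<forall>e\<in>T. (\<Inter>a\<in>crossing e. \<pi> a) = {})"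
proof -
  have "\<exists>\<pi>. valid_partial C \<pi>" if "C \<subseteq> L" for C
    using finite_subset[OF that finite_links] that
  proof (induction C rule: finite_ranking_induct[where f = nesting])
    case empty
    have "valid_partial {} (\<lambda>_. {})"
      using two_le_card_crossing by (fastforce simp: valid_partial_def)
    then show ?case by blast
  next
    case (insert l C)
    show ?case
    proof (cases "l \<in> C")
      case True
      then show ?thesis using insert.IH insert.prems by (simp add: insert_absorb)
    next
      case False
      obtain \<pi> where "valid_partial C \<pi>" using insert.IH insert.prems by auto
      then have "\<exists>p. valid_partial (insert l C) (\<pi>(l := p))"
        using valid_partial_extend[of C l] insert False by auto
      then show ?thesis by blast
    qed
  qed
  then obtain \<pi> where "valid_partial L \<pi>" by blast
  moreover have "crossing e \<subseteq> L" for e by (auto simp: crossing_def)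
  ultimately show ?thesis by (auto simp: valid_partial_def)
qed

end

section \<open>Walks and connectivity\<close>

fun walk_edges :: "'a list \<Rightarrow> 'a set set" where
  "walk_edges [] = {}"
| "walk_edges [x] = {}"
| "walk_edges (x # y # zs) = insert {x, y} (walk_edges (y # zs))"

lemma path_edges_Cons_Cons: "path_edges (x # y # zs) = insert {x, y} (path_edges (y # zs))"
proof -
  have image: "path_edges xs = (\<lambda>i. {xs ! i, xs ! Suc i}) ` {i. Suc i < length xs}" for xs :: "'a list"
    unfolding path_edges_def by blast
  have "{i. Suc i < length (x # y # zs)} = insert 0 (Suc ` {i. Suc i < length (y # zs)})"
    by (auto simp: image_iff less_Suc_eq_0_disj)
  then show ?thesis unfolding image by (simp add: image_image)
qed

lemma path_edges_eq_walk_edges: "path_edges xs = walk_edges xs"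
  by (induction xs rule: walk_edges.induct) (simp_all add: path_edges_Cons_Cons, simp_all add: path_edges_def)

definition walk :: "'a set set \<Rightarrow> 'a list \<Rightarrow> bool" where
  "walk F xs \<longleftrightarrow> xs \<noteq> [] \<and> walk_edges xs \<subseteq> F"

lemma spath_iff_walk_distinct: "spath F xs \<longleftrightarrow> walk F xs \<and> distinct xs"
  unfolding spath_def walk_def path_edges_eq_walk_edges[symmetric] path_edges_def by blast

lemma walk_edges_append: "walk_edges (xs @ y # ys) = walk_edges (xs @ [y]) \<union> walk_edges (y # ys)"
  by (induction xs rule: walk_edges.induct) auto

lemma walk_edges_rev: "walk_edges (rev xs) = walk_edges xs"
proof (induction xs rule: walk_edges.induct)
  case (3 x y zs)
  have "walk_edges (rev (x # y # zs)) = walk_edges (rev zs @ [y]) \<union> walk_edges [y, x]"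
    using walk_edges_append[of "rev zs" y "[x]"] by simp
  then show ?case using 3 by (auto simp: insert_commute)
qed auto

lemma walk_edges_subset_set: "f \<in> walk_edges xs \<Longrightarrow> f \<subseteq> set xs"
  by (induction xs rule: walk_edges.induct) auto

lemma walk_to_spath:
  assumes "walk F xs"
  shows "\<exists>ys. spath F ys \<and> hd ys = hd xs \<and> last ys = last xs"
  using assms
proof (induction "length xs" arbitrary: xs rule: less_induct)
  case less
  show ?case
  proof (cases "distinct xs")
    case True
    then show ?thesis using less.prems spath_iff_walk_distinct by blast
  next
    case False
    then obtain as x bs cs where xs: "xs = as @ [x] @ bs @ [x] @ cs"
      using not_distinct_decomp by blast
    let ?ys = "as @ x # cs"
    have "walk_edges xs = walk_edges (as @ [x]) \<union> walk_edges ((x # bs) @ [x]) \<union> walk_edges (x # cs)"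
      using xs walk_edges_append[of as x "bs @ x # cs"] walk_edges_append[of "x # bs" x cs] by auto
    then have "walk F ?ys" using less.prems walk_edges_append[of as x cs] by (auto simp: walk_def)
    moreover have "hd ?ys = hd xs" "last ?ys = last xs" using xs by (cases as; cases cs; simp)+
    moreover have "length ?ys < length xs" using xs by simp
    ultimately show ?thesis using less.hyps by metis
  qed
qed

lemma connected_in_iff_walk: "connected_in F u v \<longleftrightarrow> (\<exists>xs. walk F xs \<and> hd xs = u \<and> last xs = v)"
  unfolding connected_in_def using walk_to_spath spath_iff_walk_distinct by metis

lemma connected_in_refl: "connected_in F u u"
  unfolding connected_in_iff_walk by (rule exI[of _ "[u]"]) (simp add: walk_def)

lemma connected_in_sym: "connected_in F u v \<Longrightarrow> connected_in F v u"
  unfolding connected_in_iff_walk walk_def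
  by (metis Nil_is_rev_conv hd_rev last_rev walk_edges_rev)

lemma connected_in_trans:
  assumes "connected_in F u v" "connected_in F v w"
  shows "connected_in F u w"
proof -
  obtain xs ys where "walk F xs" "hd xs = u" "last xs = v" "walk F ys" "hd ys = v" "last ys = w"
    using assms unfolding connected_in_iff_walk by blast
  then obtain xs' ys' where xs: "xs = xs' @ [v]" and ys: "ys = v # ys'"
    unfolding walk_def by (metis append_butlast_last_id list.collapse)
  have "walk_edges (xs' @ v # ys') = walk_edges xs \<union> walk_edges ys"
    using walk_edges_append[of xs' v ys'] xs ys by simp
  moreover have "hd (xs' @ v # ys') = u" "last (xs' @ v # ys') = w"
    using \<open>hd xs = u\<close> \<open>last ys = w\<close> xs ys by (cases xs'; cases ys'; simp)+
  ultimately show ?thesis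
    using \<open>walk F xs\<close> \<open>walk F ys\<close> unfolding connected_in_iff_walk walk_def by blast
qed

lemma connected_in_mono: "connected_in F u v \<Longrightarrow> F \<subseteq> F' \<Longrightarrow> connected_in F' u v"
  unfolding connected_in_iff_walk walk_def by blast

lemma connected_in_edge: "{u, v} \<in> F \<Longrightarrow> connected_in F u v"
  unfolding connected_in_iff_walk by (rule exI[of _ "[u, v]"]) (simp add: walk_def)

lemma connected_in_walk_vertex: "walk F xs \<Longrightarrow> x \<in> set xs \<Longrightarrow> connected_in F (hd xs) x"
proof (induction xs rule: walk_edges.induct)
  case (3 a b zs)
  have "walk F (b # zs)" "{a, b} \<in> F" using 3(2) by (auto simp: walk_def)
  then show ?case
    using 3 connected_in_refl connected_in_edge connected_in_trans by (metis list.sel(1) set_ConsD)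
qed (auto simp: connected_in_refl)

lemma connected_in_avoid_edge:
  assumes "connected_in F x z" "c \<in> f"
  shows "connected_in (F - {f}) x z \<or> connected_in F x c"
proof -
  obtain Q where Q: "walk F Q" "hd Q = x" "last Q = z"
    using assms(1) unfolding connected_in_iff_walk by blast
  show ?thesis
  proof (cases "f \<in> walk_edges Q")
    case True
    then have "c \<in> set Q" using walk_edges_subset_set assms(2) by blast
    then show ?thesis using connected_in_walk_vertex[OF Q(1)] Q(2) by blast
  next
    case False
    then have "walk (F - {f}) Q" using Q(1) by (auto simp: walk_def)
    then show ?thesis using Q(2,3) unfolding connected_in_iff_walk by blast
  qed
qed

lemma walk_edge_endpoint:
  assumes "walk F p" "{a, b} \<in> walk_edges p"
  shows "connected_in (F - {{a, b}}) (hd p) a \<or> connected_in (F - {{a, b}}) (hd p) b"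
  using assms
proof (induction p rule: walk_edges.induct)
  case (3 x y zs)
  show ?case
  proof (cases "{a, b} = {x, y}")
    case True
    then show ?thesis using connected_in_refl by (metis doubleton_eq_iff list.sel(1))
  next
    case False
    then have "walk F (y # zs)" "{a, b} \<in> walk_edges (y # zs)" "{x, y} \<in> F - {{a, b}}"
      using 3(2,3) by (auto simp: walk_def)
    then show ?thesis using 3(1) connected_in_edge connected_in_trans by (metis list.sel(1))
  qed
qed auto

section \<open>Fundamental cuts of a rooted spanning tree\<close>

lemma distinct_hd_eq_last:
  assumes "distinct ys" "ys \<noteq> []" "hd ys = last ys"
  shows "ys = [hd ys]"
  using assms by (cases ys) (auto split: if_splits)

lemma card_cut_singleton: "card (cut E {u}) = deg E u"
proof -
  have "card (e \<inter> {u}) = 1 \<longleftrightarrow> u \<in> e" for e :: "'a set"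
    by (cases "u \<in> e") auto
  then show ?thesis by (simp add: cut_def deg_def)
qed

locale rooted_tree =
  fixes V :: "'a set" and E T :: "'a set set" and r :: 'a
  assumes graph: "graph V E" and spanning: "spanning_tree V E T" and root: "r \<in> V"
begin

lemma tree_subset: "T \<subseteq> E"
  using spanning by (simp add: spanning_tree_def)

lemma edge_endpoints: "x \<in> E \<Longrightarrow> \<exists>a b. x = {a, b} \<and> a \<noteq> b \<and> a \<in> V \<and> b \<in> V"
  using graph by (simp add: graph_def)

lemma finite_vertices: "finite V"
  using graph by (simp add: graph_def)

lemma finite_edges: "finite E"
proof -
  have "E \<subseteq> Pow V" using edge_endpoints by blast
  then show ?thesis using finite_vertices finite_subset by blast
qed

lemma tree_connected: "u \<in> V \<Longrightarrow> v \<in> V \<Longrightarrow> connected_in T u v"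
  using spanning by (simp add: spanning_tree_def)

lemma tree_edge_bridge: "e \<in> T \<Longrightarrow> e = {a, b} \<Longrightarrow> \<not> connected_in (T - {e}) a b"
  using spanning by (simp add: spanning_tree_def)

lemma cut_complement:
  assumes "X \<subseteq> V"
  shows "cut E (V - X) = cut E X"
proof -
  have "card (x \<inter> (V - X)) = 1 \<longleftrightarrow> card (x \<inter> X) = 1" if x: "x \<in> E" for x
  proof -
    obtain a b where "x = {a, b}" "a \<noteq> b" "a \<in> V" "b \<in> V" using edge_endpoints x by blast
    then show ?thesis using card_pair_Int_eq_1_iff[of a b] by auto
  qed
  then show ?thesis by (auto simp: cut_def)
qed

lemma spath_unique:
  assumes "spath T xs" "spath T ys" "hd xs = hd ys" "last xs = last ys"
  shows "xs = ys"
  using assms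
proof (induction xs arbitrary: ys rule: walk_edges.induct)
  case 1
  then show ?case by (simp add: spath_def)
next
  case (2 x)
  then have "ys = [hd ys]" using distinct_hd_eq_last[of ys] by (simp add: spath_def)
  then show ?case using 2 by simp
next
  case (3 x y zs)
  have dxs: "distinct (x # y # zs)" and wxs: "walk T (x # y # zs)"
    using 3(2) spath_iff_walk_distinct by blast+
  obtain ws where ys: "ys = x # ws" using 3(3,4) by (cases ys) (auto simp: spath_def)
  show ?case
  proof (cases ws)
    case Nil
    then show ?thesis using distinct_hd_eq_last[OF dxs] 3(5) ys by simp
  next
    case (Cons w ws')
    have dys: "distinct (x # w # ws')" and wys: "walk T (x # w # ws')"
      using 3(3) ys Cons spath_iff_walk_distinct by blast+
    show ?thesis
    proof (cases "w = y")
      case True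
      have "spath T (y # zs)" "spath T (w # ws')"
        using dxs wxs dys wys by (auto simp: spath_iff_walk_distinct walk_def)
      moreover have "last (y # zs) = last (w # ws')" using 3(5) ys Cons by simp
      ultimately have "y # zs = w # ws'" using 3(1) True by (metis list.sel(1))
      then show ?thesis using ys Cons by simp
    next
      case False
      let ?e = "{x, y}"
      have "?e \<notin> walk_edges (y # zs)" "?e \<notin> walk_edges (w # ws')" "?e \<noteq> {x, w}"
        using dxs dys False walk_edges_subset_set by (fastforce simp: doubleton_eq_iff)+
      then have "walk (T - {?e}) (y # zs)" "walk (T - {?e}) (x # w # ws')"
        using wxs wys by (auto simp: walk_def)
      then have "connected_in (T - {?e}) y (last (y # zs))" "connected_in (T - {?e}) x (last ys)"
        using ys Cons unfolding connected_in_iff_walk by fastforce+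
      then have "connected_in (T - {?e}) x y"
        using 3(5) connected_in_sym connected_in_trans by (metis last_ConsR list.discI)
      then show ?thesis using tree_edge_bridge wxs by (simp add: walk_def)
    qed
  qed
qed

lemma tree_path:
  assumes "u \<in> V" "v \<in> V"
  shows "spath T (tree_path T u v)" "hd (tree_path T u v) = u" "last (tree_path T u v) = v"
proof -
  have "\<exists>xs. spath T xs \<and> hd xs = u \<and> last xs = v"
    using tree_connected[OF assms] unfolding connected_in_def .
  then have "\<exists>!xs. spath T xs \<and> hd xs = u \<and> last xs = v"
    using spath_unique by metis
  then have "spath T (tree_path T u v) \<and> hd (tree_path T u v) = u \<and> last (tree_path T u v) = v"
    unfolding tree_path_def by (rule theI')
  then show "spath T (tree_path T u v)" "hd (tree_path T u v) = u" "last (tree_path T u v) = v"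
    by auto
qed

lemma in_tree_path_iff:
  assumes "e \<in> T" "u \<in> V" "v \<in> V"
  shows "e \<in> path_edges (tree_path T u v) \<longleftrightarrow> \<not> connected_in (T - {e}) u v"
proof
  assume e: "e \<in> path_edges (tree_path T u v)"
  show "\<not> connected_in (T - {e}) u v"
  proof
    assume "connected_in (T - {e}) u v"
    then obtain q where q: "spath (T - {e}) q" "hd q = u" "last q = v"
      by (auto simp: connected_in_def)
    then have "spath T q" by (auto simp: spath_def)
    then have "q = tree_path T u v" using spath_unique tree_path[OF assms(2,3)] q(2,3) by metis
    then show False using e q(1) by (auto simp: spath_iff_walk_distinct walk_def path_edges_eq_walk_edges)
  qed
next
  assume "\<not> connected_in (T - {e}) u v"
  then show "e \<in> path_edges (tree_path T u v)"
    using tree_path[OF assms(2,3)] unfolding connected_in_iff_walk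
    by (auto simp: spath_iff_walk_distinct walk_def path_edges_eq_walk_edges)
qed

lemma in_link_path_iff:
  assumes "e \<in> T" "u \<in> V" "v \<in> V"
  shows "e \<in> link_path T {u, v} \<longleftrightarrow> \<not> connected_in (T - {e}) u v"
proof -
  have "e \<in> link_path T {u, v} \<longleftrightarrow>
      e \<in> path_edges (tree_path T u v) \<or> e \<in> path_edges (tree_path T v u)"
    unfolding link_path_def by (auto simp: doubleton_eq_iff)
  then show ?thesis using in_tree_path_iff assms connected_in_sym by metis
qed

lemma connected_minus_to_endpoint:
  assumes "e \<in> T" "e = {a, b}" "w \<in> V" "a \<in> V"
  shows "connected_in (T - {e}) w a \<or> connected_in (T - {e}) w b"
proof -
  let ?p = "tree_path T w a"
  have p: "walk T ?p" "hd ?p = w" "last ?p = a"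
    using tree_path[OF assms(3,4)] spath_iff_walk_distinct by blast+
  show ?thesis
  proof (cases "e \<in> walk_edges ?p")
    case True
    then show ?thesis using walk_edge_endpoint[OF p(1)] assms(2) p(2) by simp
  next
    case False
    then have "walk (T - {e}) ?p" using p(1) by (auto simp: walk_def)
    then show ?thesis using p(2,3) unfolding connected_in_iff_walk by blast
  qed
qed

definition below :: "'a set \<Rightarrow> 'a set" where
  "below e = {w\<in>V. \<not> connected_in (T - {e}) r w}"

lemma below_subset: "below e \<subseteq> V"
  by (auto simp: below_def)

lemma root_notin_below: "r \<notin> below e"
  by (simp add: below_def connected_in_refl)

lemma connected_minus_iff_below:
  assumes "e \<in> T" "u \<in> V" "v \<in> V"
  shows "connected_in (T - {e}) u v \<longleftrightarrow> (u \<in> below e \<longleftrightarrow> v \<in> below e)"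
proof
  assume "connected_in (T - {e}) u v"
  then have "connected_in (T - {e}) r u \<longleftrightarrow> connected_in (T - {e}) r v"
    using connected_in_sym connected_in_trans by metis
  then show "u \<in> below e \<longleftrightarrow> v \<in> below e" using assms by (simp add: below_def)
next
  assume same_side: "u \<in> below e \<longleftrightarrow> v \<in> below e"
  show "connected_in (T - {e}) u v"
  proof (cases "u \<in> below e")
    case False
    then have "connected_in (T - {e}) r u" "connected_in (T - {e}) r v"
      using same_side assms(2,3) by (auto simp: below_def)
    then show ?thesis using connected_in_sym connected_in_trans by metis
  next
    case True
    obtain a b where "e = {a, b}" "a \<in> V" "b \<in> V"
      using edge_endpoints tree_subset assms(1) by blast
    then have "\<exists>a b. e = {a, b} \<and> a \<in> V \<and> connected_in (T - {e}) r a"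
      using connected_minus_to_endpoint[OF assms(1) _ root] by (metis insert_commute)
    then obtain a b where ab: "e = {a, b}" "a \<in> V" "connected_in (T - {e}) r a" by blast
    have "\<not> connected_in (T - {e}) x a" if "x \<in> below e" for x
      using that ab(3) connected_in_sym connected_in_trans by (metis below_def mem_Collect_eq)
    then have "connected_in (T - {e}) u b" "connected_in (T - {e}) v b"
      using connected_minus_to_endpoint[OF assms(1) ab(1) _ ab(2)] assms(2,3) True same_side by blast+
    then show ?thesis using connected_in_sym connected_in_trans by metis
  qed
qed

lemma tree_edge_crosses_below:
  assumes "e \<in> T" "e = {a, b}"
  shows "a \<in> V" "b \<in> V" "a \<noteq> b" "a \<in> below e \<longleftrightarrow> b \<notin> below e"
proof -
  show "a \<in> V" "b \<in> V" "a \<noteq> b"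
    using edge_endpoints tree_subset assms by (fastforce simp: doubleton_eq_iff)+
  then show "a \<in> below e \<longleftrightarrow> b \<notin> below e"
    using connected_minus_iff_below[OF assms(1)] tree_edge_bridge[OF assms] by blast
qed

lemma in_link_path_iff_crosses_below:
  assumes "e \<in> T" "l \<in> E"
  shows "e \<in> link_path T l \<longleftrightarrow> card (l \<inter> below e) = 1"
proof -
  obtain u v where uv: "l = {u, v}" "u \<noteq> v" "u \<in> V" "v \<in> V" using edge_endpoints assms(2) by blast
  then show ?thesis
    using in_link_path_iff[OF assms(1) uv(3,4)] connected_minus_iff_below[OF assms(1) uv(3,4)]
      card_pair_Int_eq_1_iff[OF uv(2)] by simp
qed

lemma below_laminar:
  assumes e: "e \<in> T" and f: "f \<in> T" and meet: "below e \<inter> below f \<noteq> {}"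
  shows "below e \<subseteq> below f \<or> below f \<subseteq> below e"
proof (cases "e = f")
  case False
  obtain c d where cd: "f = {c, d}" "c \<in> V" "d \<in> V"
    using edge_endpoints tree_subset f by blast
  have "connected_in (T - {e}) c d" using connected_in_edge[of c d "T - {e}"] f False cd(1) by simp
  then have c_d: "c \<in> below e \<longleftrightarrow> d \<in> below e" using connected_minus_iff_below[OF e cd(2,3)] by simp
  have c_f: "c \<in> f" using cd(1) by simp
  show ?thesis
  proof (cases "c \<in> below e")
    case True
    have "z \<in> below e" if z: "z \<in> below f" for z
    proof (rule ccontr)
      assume "z \<notin> below e"
      then have "connected_in (T - {e}) r z" using z below_subset by (auto simp: below_def)
      then have "connected_in (T - {e} - {f}) r z \<or> connected_in (T - {e}) r c"
        by (rule connected_in_avoid_edge[OF _ c_f])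
      moreover have "\<not> connected_in (T - {e}) r c" using True by (simp add: below_def)
      ultimately have "connected_in (T - {f}) r z" using connected_in_mono[of "T - {e} - {f}" r z] by blast
      then show False using z by (simp add: below_def)
    qed
    then show ?thesis by blast
  next
    case False
    obtain w where w: "w \<in> below e" "w \<in> below f" using meet by blast
    have "z \<in> below f" if z: "z \<in> below e" for z
    proof -
      have V: "w \<in> V" "z \<in> V" using w z below_subset by blast+
      then have "connected_in (T - {e}) w z" using connected_minus_iff_below[OF e] w z by blast
      then have "connected_in (T - {e} - {f}) w z \<or> connected_in (T - {e}) w c"
        by (rule connected_in_avoid_edge[OF _ c_f])
      moreover have "\<not> connected_in (T - {e}) w c"
        using connected_minus_iff_below[OF e V(1) cd(2)] w(1) False by blast
      ultimately have "connected_in (T - {f}) w z" using connected_in_mono[of "T - {e} - {f}" w z] by blast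
      then show ?thesis using connected_minus_iff_below[OF f V] w(2) by blast
    qed
    then show ?thesis by blast
  qed
qed simp

lemma leaf_if_below_singleton:
  assumes "e \<in> T" "below e = {u}"
  shows "deg T u = 1"
proof -
  have u: "u \<in> V" using assms(2) below_subset by blast
  have "f = e" if f: "f \<in> T" "u \<in> f" for f
  proof (rule ccontr)
    assume "f \<noteq> e"
    obtain a b where "f = {a, b}" "a \<noteq> b" "a \<in> V" "b \<in> V"
      using edge_endpoints tree_subset f(1) by blast
    then have "\<exists>w. f = {u, w} \<and> w \<in> V \<and> w \<noteq> u" using f(2) by (auto simp: insert_commute)
    then obtain w where w: "f = {u, w}" "w \<in> V" "w \<noteq> u" by blast
    then have "connected_in (T - {e}) u w"
      using connected_in_edge[of u w "T - {e}"] f(1) \<open>f \<noteq> e\<close> by simp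
    then have "w \<in> below e" using connected_minus_iff_below[OF assms(1) u w(2)] assms(2) by simp
    then show False using assms(2) w(3) by simp
  qed
  moreover have "u \<in> e"
  proof -
    obtain a b where ab: "e = {a, b}" using edge_endpoints tree_subset assms(1) by blast
    then have "a \<in> below e \<or> b \<in> below e" using tree_edge_crosses_below(4)[OF assms(1)] by blast
    then show ?thesis using assms(2) ab by auto
  qed
  ultimately have "{f\<in>T. u \<in> f} = {e}" using assms(1) by blast
  then show ?thesis by (simp add: deg_def)
qed

lemma cut_below:
  assumes "e \<in> T"
  shows "cut E (below e) = insert e {l\<in>E - T. card (l \<inter> below e) = 1}"
proof -
  have "card (x \<inter> below e) = 1 \<longleftrightarrow> x = e" if x: "x \<in> T" for x
  proof -
    obtain c d where cd: "x = {c, d}" using edge_endpoints tree_subset x by blast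
    have "c \<in> V" "d \<in> V" "c \<noteq> d" using tree_edge_crosses_below[OF x cd] by auto
    then have "card (x \<inter> below e) = 1 \<longleftrightarrow> \<not> connected_in (T - {e}) c d"
      using connected_minus_iff_below[OF assms] card_pair_Int_eq_1_iff cd by simp
    then show ?thesis using connected_in_edge[of c d "T - {e}"] tree_edge_bridge[OF assms] x cd by blast
  qed
  then show ?thesis using assms tree_subset by (auto simp: cut_def)
qed

lemma below_size_cases:
  assumes "e \<in> T"
  shows "card (below e) = 1 \<or> below e = V - {r} \<or> (2 \<le> card (below e) \<and> card (below e) \<le> card V - 2)"
proof -
  have sub: "below e \<subseteq> V - {r}" using below_subset root_notin_below by blast
  have fin: "finite (V - {r})" using finite_vertices by simp
  obtain a b where "e = {a, b}" using edge_endpoints tree_subset assms by blast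
  then have "below e \<noteq> {}" using tree_edge_crosses_below(4)[OF assms] by blast
  then have "card (below e) \<noteq> 0" using finite_subset[OF sub fin] by simp
  moreover have "card (below e) \<le> card V - 1"
    using card_mono[OF fin sub] root finite_vertices by simp
  moreover have "card (below e) = card V - 1 \<Longrightarrow> below e = V - {r}"
    using card_seteq[OF fin sub] root finite_vertices by simp
  ultimately show ?thesis by linarith
qed

lemma card_cut_below:
  assumes "ess_4_edge_connected V E" "min_degree_ge V E 3" "e \<in> T"
  shows "3 \<le> card (cut E (below e))"
    and "card (cut E (below e)) = 3 \<Longrightarrow> card (below e) = 1 \<or> below e = V - {r}"
proof -
  have small: "3 \<le> card (cut E (below e))" if "card (below e) = 1 \<or> below e = V - {r}"
    using that
  proof
    assume "card (below e) = 1"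
    then obtain u where u: "below e = {u}" by (rule card_1_singletonE)
    then have "u \<in> V" using below_subset by blast
    then show ?thesis using u assms(2) card_cut_singleton[of E u] by (simp add: min_degree_ge_def)
  next
    assume "below e = V - {r}"
    moreover have "V - (V - {r}) = {r}" using root by blast
    ultimately have "cut E (below e) = cut E {r}" using cut_complement[of "V - {r}"] by auto
    then show ?thesis using root assms(2) card_cut_singleton[of E r] by (simp add: min_degree_ge_def)
  qed
  have big: "4 \<le> card (cut E (below e))" if "2 \<le> card (below e) \<and> card (below e) \<le> card V - 2"
    using assms(1) that below_subset unfolding ess_4_edge_connected_def by blast
  show "3 \<le> card (cut E (below e))" using below_size_cases[OF assms(3)] small big by force
  show "card (below e) = 1 \<or> below e = V - {r}" if "card (cut E (below e)) = 3"
    using below_size_cases[OF assms(3)] big that by force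
qed

lemma card_crossing_below:
  assumes "e \<in> T"
  shows "card {l\<in>E - T. card (l \<inter> below e) = 1} = card (cut E (below e)) - 1"
  using cut_below[OF assms] assms finite_edges by simp

lemma tight_crossing_below_same_end:
  assumes ess: "ess_4_edge_connected V E" and md: "min_degree_ge V E 3"
    and no_leaf_matching: "\<forall>l\<in>E - T. \<not> leaf_matching_link T r l"
    and "e \<in> T" "f \<in> T" "l \<in> E - T" "card (l \<inter> below e) = 1" "card (l \<inter> below f) = 1"
    and "card {l\<in>E - T. card (l \<inter> below e) = 1} = 2" "card {l\<in>E - T. card (l \<inter> below f) = 1} = 2"
  shows "l \<inter> below e = l \<inter> below f"
proof -
  have l: "l \<subseteq> V" using assms(6) edge_endpoints by blast
  have small: "card (below g) = 1 \<or> below g = V - {r}"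
    if g: "g \<in> T" "card {l\<in>E - T. card (l \<inter> below g) = 1} = 2" for g
  proof -
    have "card (cut E (below g)) = 3"
      using card_crossing_below[OF g(1)] card_cut_below(1)[OF ess md g(1)] g(2) by linarith
    then show ?thesis using card_cut_below(2)[OF ess md g(1)] by blast
  qed
  have eq_if_sub: "A = B" if "A \<subseteq> B" "card A = 1" "card B = 1" for A B :: "'a set"
    using that card_seteq[of B A] card.infinite by fastforce
  have inside_co_root: "l \<inter> below g \<subseteq> l \<inter> below h" if "below h = V - {r}" for g h
    using that l below_subset root_notin_below by blast
  show ?thesis
  proof (cases "below e = V - {r} \<or> below f = V - {r}")
    case True
    then show ?thesis using inside_co_root eq_if_sub assms(7,8) by metis
  next
    case False
    then obtain x y where xy: "below e = {x}" "below f = {y}"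
      using small[OF assms(4,9)] small[OF assms(5,10)] by (metis card_1_singletonE)
    then have "x \<in> l" "y \<in> l" using assms(7,8) by (auto simp: Int_insert_right split: if_splits)
    show ?thesis
    proof (rule ccontr)
      assume "l \<inter> below e \<noteq> l \<inter> below f"
      then have "x \<noteq> y" using xy by auto
      then have "l = {x, y}" using \<open>x \<in> l\<close> \<open>y \<in> l\<close> assms(6) edge_endpoints by fastforce
      moreover have "deg T x = 1" "deg T y = 1" using leaf_if_below_singleton assms(4,5) xy by blast+
      moreover have "x \<noteq> r" "y \<noteq> r" using root_notin_below xy by (metis singletonI)+
      ultimately have "leaf_matching_link T r l" unfolding leaf_matching_link_def by blast
      then show False using no_leaf_matching assms(6) by blast
    qed
  qed
qed

lemma cov_eq_crossing_below:
  assumes "e \<in> T"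
  shows "cov T (E - T) e = {l\<in>E - T. card (l \<inter> below e) = 1}"
  using in_link_path_iff_crosses_below[OF assms] by (auto simp: cov_def)

lemma laminar_links_below:
  assumes "ess_4_edge_connected V E" "min_degree_ge V E 3" "\<forall>l\<in>E - T. \<not> leaf_matching_link T r l"
  shows "laminar_links (E - T) T below"
proof
  show "finite (E - T)" using finite_edges by simp
  show "\<exists>u v. l = {u, v} \<and> u \<noteq> v" if "l \<in> E - T" for l using edge_endpoints that by blast
  show "finite T" using finite_subset[OF tree_subset finite_edges] .
  show "below e \<subseteq> below f \<or> below f \<subseteq> below e" if "e \<in> T" "f \<in> T" "below e \<inter> below f \<noteq> {}" for e f
    using below_laminar that by blast
  show "2 \<le> card {l \<in> E - T. card (l \<inter> below e) = 1}" if "e \<in> T" for e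
    using card_crossing_below[OF that] card_cut_below(1)[OF assms(1,2) that] by linarith
  show "l \<inter> below e = l \<inter> below f"
    if "e \<in> T" "f \<in> T" "l \<in> E - T" "card (l \<inter> below e) = 1" "card (l \<inter> below f) = 1"
      "card {l \<in> E - T. card (l \<inter> below e) = 1} = 2" "card {l \<in> E - T. card (l \<inter> below f) = 1} = 2"
    for l e f
    using tight_crossing_below_same_end[OF assms that] .
qed

end

section \<open>Top-down colourings\<close>

definition lca_depth :: "'a set set \<Rightarrow> 'a \<Rightarrow> 'a set \<Rightarrow> nat" where
  "lca_depth T r l = (case SOME p. l = {fst p, snd p} of (u, v) \<Rightarrow> depth T r (lca T r u v))"

lemma lca_commute: "lca T r u v = lca T r v u"
  unfolding lca_def by (simp add: conj_ac)

lemma lca_depth_eq: "l = {u, v} \<Longrightarrow> lca_depth T r l = depth T r (lca T r u v)"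
proof -
  assume l: "l = {u, v}"
  obtain a b where ab: "(SOME p. l = {fst p, snd p}) = (a, b)" by fastforce
  have "l = {a, b}" using someI[of "\<lambda>p. l = {fst p, snd p}" "(u, v)"] l ab by simp
  then have "lca T r a b = lca T r u v" using l lca_commute by (metis doubleton_eq_iff)
  then show ?thesis using ab by (simp add: lca_depth_def)
qed

lemma higher_lca_imp_lca_depth_less: "higher_lca T r l' l \<Longrightarrow> lca_depth T r l' < lca_depth T r l"
  unfolding higher_lca_def using lca_depth_eq by metis

lemma ex_top_down_order:
  assumes "finite L"
  shows "\<exists>ord. distinct ord \<and> set ord = L \<and> top_down T r ord"
proof -
  obtain xs where xs: "distinct xs" "set xs = L" using finite_distinct_list[OF assms] by blast
  let ?ord = "sort_key (lca_depth T r) xs"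
  have sorted: "sorted (map (lca_depth T r) ?ord)" by simp
  have "top_down T r ?ord" unfolding top_down_def
  proof (intro allI impI)
    fix i j assume ij: "i < length ?ord \<and> j < length ?ord \<and> higher_lca T r (?ord ! i) (?ord ! j)"
    then have "lca_depth T r (?ord ! i) < lca_depth T r (?ord ! j)"
      by (intro higher_lca_imp_lca_depth_less) simp
    then show "i < j" using sorted_nth_mono[OF sorted, of j i] ij by (metis leI leD length_map nth_map)
  qed
  then show ?thesis using xs by (intro exI[of _ ?ord]) simp
qed

lemma naive_coloring_complement:
  assumes "distinct ord" "set ord = L" "\<forall>l\<in>L. \<pi> l \<subseteq> {1..q} \<and> card (\<pi> l) = q - p" "p \<le> q"
  shows "naive_coloring L p q ord (\<lambda>l. {1..q} - \<pi> l)"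
proof -
  have "card ({1..q} - \<pi> l) = p" if "l \<in> L" for l
  proof -
    have "\<pi> l \<subseteq> {1..q}" "card (\<pi> l) = q - p" using assms(3) that by auto
    moreover have "finite (\<pi> l)" using \<open>\<pi> l \<subseteq> {1..q}\<close> finite_subset by blast
    ultimately show ?thesis using card_Diff_subset[of "\<pi> l" "{1..q}"] assms(4) by simp
  qed
  then show ?thesis using assms(1,2) by (simp add: naive_coloring_def)
qed

lemma admissible_if_all_colors:
  assumes "\<And>e. e \<in> T \<Longrightarrow> (\<Union>l\<in>cov T L e. col l) = {1..q}"
  shows "admissible T L q ord col"
  unfolding admissible_def received_def using assms by (simp add: Int_absorb2)

theorem lemma7:
  fixes V :: "'a set" and E T :: "'a set set" and r :: 'a
  assumes "graph V E"
    and "ess_4_edge_connected V E"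
    and "min_degree_ge V E 3"
    and "spanning_tree V E T"
    and "r \<in> V"
    and "\<forall>l\<in>E - T. \<not> leaf_matching_link T r l"
  shows "\<exists>ord col. admissible_top_down_coloring T r (E - T) 3 5 ord col"
proof -
  interpret rooted_tree V E T r using assms(1,4,5) by unfold_locales
  interpret laminar_links "E - T" T below by (rule laminar_links_below[OF assms(2,3,6)])
  obtain \<pi> :: "'a set \<Rightarrow> nat set" where \<pi>: "\<forall>l\<in>E - T. \<pi> l \<subseteq> {1..5} \<and> card (\<pi> l) = 2"
    "\<forall>e\<in>T. (\<Inter>l\<in>crossing e. \<pi> l) = {}"
    using ex_missing_pairs by blast
  obtain ord where ord: "distinct ord" "set ord = E - T" "top_down T r ord"
    using ex_top_down_order[OF finite_links] by blast
  have "naive_coloring (E - T) 3 5 ord (\<lambda>l. {1..5} - \<pi> l)"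
    using naive_coloring_complement[OF ord(1,2)] \<pi>(1) by simp
  moreover have "admissible T (E - T) 5 ord (\<lambda>l. {1..5} - \<pi> l)"
    using \<pi>(2) by (intro admissible_if_all_colors) (auto simp: cov_eq_crossing_below crossing_def)
  ultimately show ?thesis using ord(3) unfolding admissible_top_down_coloring_def by blast
qed

end
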